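(* Let $K$ be a number field, let $\alpha>1$ be real, and let $F\in K[[x^{\mathbb{R}}]]$ be a Hahn series satisfying $\sum_{i=0}^d P_i(x)F(x^{\alpha^i})=0$ for some polynomials $P_0,\dots,P_d\in K[x]$ with $P_d\ne0$. Then only finitely many of the sets $T(s)=\alpha^{\mathbb{Z}}s+\mathbb{Z}[\alpha,\alpha^{-1}]$ ($s\in\mathbb{R}$) have nonempty intersection with $P(F)$; in other words, the set $\widehat{P(F)}$ of equivalence classes of the relation $\sim$ meeting $P(F)$ is finite.
   Context: $K[[x^{\mathbb{R}}]]$ is the field of Hahn series $\sum_{i\in\mathbb{R}} f_ix^i$ ($f_i\in K$) with well-ordered support $P(F)=\{i:f_i\ne0\}$; $F(x^\gamma)=\sum_if_ix^{\gamma i}$. $\mathbb{Z}[\alpha,\alpha^{-1}]$ is the subring of $\mathbb{R}$ generated by $\alpha^{\pm1}$. The relation $x\sim y$ on $\mathbb{R}$ holds iff $\alpha^mx+r=y$ for some $m\in\mathbb{Z}$, $r\in\mathbb{Z}[\alpha,\alpha^{-1}]$; its equivalence classes are exactly the sets $T(s)=\{\alpha^ms+r:m\in\mathbb{Z}, r\in\mathbb{Z}[\alpha,\alpha^{-1}]\}$. *)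

theory Defs
  imports Complex_Main "HOL-Computational_Algebra.Polynomial"
begin

definition number_field :: "complex set \<Rightarrow> bool" where
  "number_field K \<longleftrightarrow>
     0 \<in> K \<and> 1 \<in> K \<and>
     (\<forall>a\<in>K. \<forall>b\<in>K. a + b \<in> K \<and> a - b \<in> K \<and> a * b \<in> K) \<and>
     (\<forall>a\<in>K. a \<noteq> 0 \<longrightarrow> inverse a \<in> K) \<and>
     (\<exists>B. finite B \<and> B \<subseteq> K \<and>
        (\<forall>a\<in>K. \<exists>c. (\<forall>b\<in>B. c b \<in> \<rat>) \<and> a = (\<Sum>b\<in>B. c b * b)))"

definition hsupp :: "(real \<Rightarrow> complex) \<Rightarrow> real set" where
  "hsupp F = {i. F i \<noteq> 0}"

definition hahn_series :: "complex set \<Rightarrow> (real \<Rightarrow> complex) \<Rightarrow> bool" where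
  "hahn_series K F \<longleftrightarrow> (\<forall>i. F i \<in> K) \<and>
     (\<forall>S. S \<subseteq> hsupp F \<and> S \<noteq> {} \<longrightarrow> (\<exists>m\<in>S. \<forall>s\<in>S. m \<le> s))"

text \<open>Coefficient of x^t in  P(x) * F(x^gamma), where F(x^gamma) = sum_i f_i x^(gamma i).\<close>
definition poly_subst_coeff ::
  "complex poly \<Rightarrow> real \<Rightarrow> (real \<Rightarrow> complex) \<Rightarrow> real \<Rightarrow> complex" where
  "poly_subst_coeff P \<gamma> F t = (\<Sum>k\<le>degree P. coeff P k * F ((t - real k) / \<gamma>))"

inductive_set Zalpha :: "real \<Rightarrow> real set" for \<alpha> :: real where
  one: "1 \<in> Zalpha \<alpha>"
| gen: "\<alpha> \<in> Zalpha \<alpha>"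
| geninv: "inverse \<alpha> \<in> Zalpha \<alpha>"
| add: "x \<in> Zalpha \<alpha> \<Longrightarrow> y \<in> Zalpha \<alpha> \<Longrightarrow> x + y \<in> Zalpha \<alpha>"
| neg: "x \<in> Zalpha \<alpha> \<Longrightarrow> - x \<in> Zalpha \<alpha>"
| mult: "x \<in> Zalpha \<alpha> \<Longrightarrow> y \<in> Zalpha \<alpha> \<Longrightarrow> x * y \<in> Zalpha \<alpha>"

definition Tcls :: "real \<Rightarrow> real \<Rightarrow> real set" where
  "Tcls \<alpha> s = {\<alpha> powi m * s + r | m r. r \<in> Zalpha \<alpha>}"

end

theory Submission
  imports Defs
begin

(* Let v be the least support point of F in a class T, and k_i the order of P_i at 0.
   A contribution of T to the coefficient of x^t in sum_i P_i(x) F(x^(alpha^i)) needs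
   t >= k_i + alpha^i v, with equality only for the lowest term of P_i paired with F(v).
   So if the minimum of the exponents k_i + alpha^i v were attained for a single i, that
   coefficient would be a nonzero multiple of F(v), contradicting the equation.  Hence two
   of the lines v -> k_i + alpha^i v meet at v, which leaves finitely many v, and every
   class meeting the support is T(v) for one of them. *)

lemma Zalpha_of_int: "of_int n \<in> Zalpha \<alpha>"
proof (induction n rule: int_induct[where k = 0])
  case base
  show ?case using Zalpha.add[OF Zalpha.one Zalpha.neg[OF Zalpha.one]] by simp
next
  case (step1 i)
  then show ?case using Zalpha.add[OF _ Zalpha.one] by simp
next
  case (step2 i)
  then show ?case using Zalpha.add[OF _ Zalpha.neg[OF Zalpha.one]] by simp
qed

lemma Zalpha_power: "\<alpha> ^ n \<in> Zalpha \<alpha>"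
  by (induction n) (auto intro: Zalpha.intros)

lemma Zalpha_inverse_power: "inverse \<alpha> ^ n \<in> Zalpha \<alpha>"
  by (induction n) (auto intro: Zalpha.intros)

lemma Zalpha_power_int: "\<alpha> powi j \<in> Zalpha \<alpha>"
  by (cases "j \<ge> 0") (auto simp: power_int_def Zalpha_power Zalpha_inverse_power)

lemma Tcls_subset_if_mem:
  assumes "\<alpha> \<noteq> 0" and "v \<in> Tcls \<alpha> s"
  shows "Tcls \<alpha> v \<subseteq> Tcls \<alpha> s"
proof
  from assms(2) obtain m r where v: "v = \<alpha> powi m * s + r" "r \<in> Zalpha \<alpha>"
    unfolding Tcls_def by blast
  fix x assume "x \<in> Tcls \<alpha> v"
  then obtain n r' where x: "x = \<alpha> powi n * v + r'" "r' \<in> Zalpha \<alpha>"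
    unfolding Tcls_def by blast
  have "x = \<alpha> powi (n + m) * s + (\<alpha> powi n * r + r')"
    using x v assms(1) by (simp add: power_int_add algebra_simps)
  moreover have "\<alpha> powi n * r + r' \<in> Zalpha \<alpha>"
    by (intro Zalpha.add Zalpha.mult Zalpha_power_int v x)
  ultimately show "x \<in> Tcls \<alpha> s" unfolding Tcls_def by blast
qed

lemma Tcls_eq_if_mem:
  assumes "\<alpha> \<noteq> 0" and "v \<in> Tcls \<alpha> s"
  shows "Tcls \<alpha> v = Tcls \<alpha> s"
proof
  show "Tcls \<alpha> v \<subseteq> Tcls \<alpha> s" using Tcls_subset_if_mem[OF assms] .
  have "s \<in> Tcls \<alpha> v"
  proof -
    from assms(2) obtain m r where v: "v = \<alpha> powi m * s + r" "r \<in> Zalpha \<alpha>"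
      unfolding Tcls_def by blast
    then have "s = \<alpha> powi (- m) * v + (- (\<alpha> powi (- m) * r))"
      using assms(1) by (simp add: power_int_minus field_simps)
    moreover have "- (\<alpha> powi (- m) * r) \<in> Zalpha \<alpha>"
      by (intro Zalpha.neg Zalpha.mult Zalpha_power_int v)
    ultimately show ?thesis unfolding Tcls_def by blast
  qed
  then show "Tcls \<alpha> s \<subseteq> Tcls \<alpha> v" using Tcls_subset_if_mem[OF assms(1)] by blast
qed

lemma shifted_exponent_mem_Tcls:
  assumes "\<alpha> \<noteq> 0"
  shows "(real k0 + \<alpha> ^ i0 * v - real k) / \<alpha> ^ i \<in> Tcls \<alpha> v"
proof -
  have "(real k0 + \<alpha> ^ i0 * v - real k) / \<alpha> ^ i
      = \<alpha> powi (int i0 - int i) * v + of_int (int k0 - int k) * inverse \<alpha> ^ i"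
    using assms by (simp add: power_int_diff field_simps)
  moreover have "of_int (int k0 - int k) * inverse \<alpha> ^ i \<in> Zalpha \<alpha>"
    by (intro Zalpha.mult Zalpha_of_int Zalpha_inverse_power)
  ultimately show ?thesis unfolding Tcls_def by blast
qed

definition poly_subdegree :: "'a::zero poly \<Rightarrow> nat" where
  "poly_subdegree p = (LEAST k. coeff p k \<noteq> 0)"

lemma coeff_poly_subdegree_nonzero: "p \<noteq> 0 \<Longrightarrow> coeff p (poly_subdegree p) \<noteq> 0"
  unfolding poly_subdegree_def by (rule LeastI_ex) (meson leading_coeff_neq_0)

lemma poly_subdegree_le: "coeff p k \<noteq> 0 \<Longrightarrow> poly_subdegree p \<le> k"
  unfolding poly_subdegree_def by (rule Least_le)

lemma poly_subdegree_le_degree: "p \<noteq> 0 \<Longrightarrow> poly_subdegree p \<le> degree p"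
  by (intro poly_subdegree_le) simp

lemma exponent_bound_if_coeff_nonzero:
  fixes \<alpha> :: real
  assumes "\<alpha> > 0" and "coeff p k \<noteq> 0" and "v \<le> (t - real k) / \<alpha> ^ i"
  shows "real (poly_subdegree p) + \<alpha> ^ i * v \<le> t"
    and "real (poly_subdegree p) + \<alpha> ^ i * v = t \<Longrightarrow> k = poly_subdegree p"
proof -
  have "\<alpha> ^ i * v \<le> t - real k"
    using assms(1,3) by (simp add: pos_le_divide_eq mult.commute)
  moreover have "poly_subdegree p \<le> k" using poly_subdegree_le[OF assms(2)] .
  ultimately show "real (poly_subdegree p) + \<alpha> ^ i * v \<le> t"
    and "real (poly_subdegree p) + \<alpha> ^ i * v = t \<Longrightarrow> k = poly_subdegree p"
    by linarith+
qed

lemma sum_poly_subst_coeff_single_term: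
  fixes d :: nat
  assumes "i0 \<le> d" and "k0 \<le> degree (P i0)"
    and "\<And>i k. i \<le> d \<Longrightarrow> (i, k) \<noteq> (i0, k0) \<Longrightarrow>
           coeff (P i) k * F ((t - real k) / \<gamma> i) = 0"
  shows "(\<Sum>i\<le>d. poly_subst_coeff (P i) (\<gamma> i) F t) = coeff (P i0) k0 * F ((t - real k0) / \<gamma> i0)"
proof -
  have "poly_subst_coeff (P i) (\<gamma> i) F t = 0" if "i \<le> d" "i \<noteq> i0" for i
    unfolding poly_subst_coeff_def using assms(3) that by (intro sum.neutral) auto
  then have "(\<Sum>i\<le>d. poly_subst_coeff (P i) (\<gamma> i) F t) = (\<Sum>i\<in>{i0}. poly_subst_coeff (P i) (\<gamma> i) F t)"
    using assms(1) by (intro sum.mono_neutral_right) auto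
  also have "\<dots> = poly_subst_coeff (P i0) (\<gamma> i0) F t"
    by simp
  also have "\<dots> = (\<Sum>k\<in>{k0}. coeff (P i0) k * F ((t - real k) / \<gamma> i0))"
    unfolding poly_subst_coeff_def using assms by (intro sum.mono_neutral_right) auto
  finally show ?thesis by simp
qed

definition exponent_collisions :: "real \<Rightarrow> (nat \<Rightarrow> 'a::zero poly) \<Rightarrow> nat \<Rightarrow> real set" where
  "exponent_collisions \<alpha> P d = {v. \<exists>i\<le>d. \<exists>j\<le>d. i \<noteq> j \<and> P i \<noteq> 0 \<and> P j \<noteq> 0 \<and>
      real (poly_subdegree (P i)) + \<alpha> ^ i * v = real (poly_subdegree (P j)) + \<alpha> ^ j * v}"

lemma finite_exponent_collisions:
  assumes "\<alpha> > 1"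
  shows "finite (exponent_collisions \<alpha> P d)"
proof -
  let ?root = "\<lambda>(i, j). (real (poly_subdegree (P j)) - real (poly_subdegree (P i))) / (\<alpha> ^ i - \<alpha> ^ j)"
  have "exponent_collisions \<alpha> P d \<subseteq> ?root ` ({..d} \<times> {..d})"
  proof
    fix v assume "v \<in> exponent_collisions \<alpha> P d"
    then obtain i j where ij: "i \<le> d" "j \<le> d" "i \<noteq> j"
      "real (poly_subdegree (P i)) + \<alpha> ^ i * v = real (poly_subdegree (P j)) + \<alpha> ^ j * v"
      unfolding exponent_collisions_def by blast
    have "\<alpha> ^ i \<noteq> \<alpha> ^ j" using ij(3) assms by (simp add: power_inject_exp)
    then have "v = ?root (i, j)" using ij(4) by (simp add: field_simps)
    then show "v \<in> ?root ` ({..d} \<times> {..d})" using ij by force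
  qed
  then show ?thesis by (rule finite_subset) simp
qed

lemma hahn_series_least_support_point:
  assumes "hahn_series K F" and "S \<inter> hsupp F \<noteq> {}"
  obtains v where "v \<in> S" "F v \<noteq> 0" "\<And>u. u \<in> S \<Longrightarrow> F u \<noteq> 0 \<Longrightarrow> v \<le> u"
proof -
  have "\<exists>m\<in>S \<inter> hsupp F. \<forall>u\<in>S \<inter> hsupp F. m \<le> u"
    using assms unfolding hahn_series_def by blast
  then show ?thesis using that unfolding hsupp_def by blast
qed

lemma least_support_point_in_exponent_collisions:
  fixes \<alpha> :: real and F :: "real \<Rightarrow> complex"
  assumes "\<alpha> > 0" and "P d \<noteq> 0"
    and equation: "\<forall>t. (\<Sum>i\<le>d. poly_subst_coeff (P i) (\<alpha> ^ i) F t) = 0"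
    and "F v \<noteq> 0"
    and least: "\<And>u. u \<in> Tcls \<alpha> v \<Longrightarrow> F u \<noteq> 0 \<Longrightarrow> v \<le> u"
  shows "v \<in> exponent_collisions \<alpha> P d"
proof (rule ccontr)
  assume no_collision: "v \<notin> exponent_collisions \<alpha> P d"
  define I where "I = {i. i \<le> d \<and> P i \<noteq> 0}"
  define e where "e i = real (poly_subdegree (P i)) + \<alpha> ^ i * v" for i
  define t where "t = Min (e ` I)"
  have "finite I" "d \<in> I" unfolding I_def using assms(2) by auto
  then obtain i0 where i0: "i0 \<in> I" "t = e i0"
    unfolding t_def using Min_in by blast
  have t_le: "t \<le> e i" if "i \<in> I" for i
    unfolding t_def using \<open>finite I\<close> that by simp
  define k0 where "k0 = poly_subdegree (P i0)"
  have unique: "i = i0" if "i \<in> I" "e i = t" for i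
    using no_collision that i0 unfolding exponent_collisions_def e_def I_def by force
  have other_terms: "coeff (P i) k * F ((t - real k) / \<alpha> ^ i) = 0"
    if "i \<le> d" "(i, k) \<noteq> (i0, k0)" for i k
  proof (rule ccontr)
    assume "coeff (P i) k * F ((t - real k) / \<alpha> ^ i) \<noteq> 0"
    then have c: "coeff (P i) k \<noteq> 0" and F_u: "F ((t - real k) / \<alpha> ^ i) \<noteq> 0" by auto
    then have "i \<in> I" using that(1) unfolding I_def by auto
    have mem: "(t - real k) / \<alpha> ^ i \<in> Tcls \<alpha> v"
      using shifted_exponent_mem_Tcls[of \<alpha> k0 i0 v k i] assms(1) i0(2)
      by (simp add: e_def k0_def)
    have "v \<le> (t - real k) / \<alpha> ^ i" using least[OF mem F_u] .
    note bound = exponent_bound_if_coeff_nonzero[OF assms(1) c this]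
    have "e i = t" using bound(1) t_le[OF \<open>i \<in> I\<close>] unfolding e_def by linarith
    then have "i = i0" and "k = k0"
      using unique[OF \<open>i \<in> I\<close>] bound(2) unfolding e_def k0_def by auto
    with that(2) show False by simp
  qed
  have "k0 \<le> degree (P i0)" using poly_subdegree_le_degree i0(1) unfolding k0_def I_def by blast
  then have "(\<Sum>i\<le>d. poly_subst_coeff (P i) (\<alpha> ^ i) F t) = coeff (P i0) k0 * F v"
    using sum_poly_subst_coeff_single_term[of i0 d k0 P F t "\<lambda>i. \<alpha> ^ i"] other_terms i0 assms(1)
    by (simp add: I_def e_def k0_def)
  moreover have "coeff (P i0) k0 \<noteq> 0"
    using coeff_poly_subdegree_nonzero i0(1) unfolding k0_def I_def by blast
  ultimately show False using equation assms(4) by simp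
qed

theorem mainTheorem8:
  fixes K :: "complex set" and \<alpha> :: real and F :: "real \<Rightarrow> complex"
    and P :: "nat \<Rightarrow> complex poly" and d :: nat
  assumes "number_field K"
    and "\<alpha> > 1"
    and "hahn_series K F"
    and "\<forall>i\<le>d. \<forall>k. coeff (P i) k \<in> K"
    and "P d \<noteq> 0"
    and "\<forall>t. (\<Sum>i\<le>d. poly_subst_coeff (P i) (\<alpha> ^ i) F t) = 0"
  shows "finite {Tcls \<alpha> s | s. Tcls \<alpha> s \<inter> hsupp F \<noteq> {}}"
proof -
  have "X \<in> Tcls \<alpha> ` exponent_collisions \<alpha> P d"
    if X_mem: "X \<in> {Tcls \<alpha> s | s. Tcls \<alpha> s \<inter> hsupp F \<noteq> {}}" for X
  proof -
    obtain s where s: "X = Tcls \<alpha> s" "X \<inter> hsupp F \<noteq> {}" using X_mem by blast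
    then obtain v where v: "v \<in> X" "F v \<noteq> 0" "\<And>u. u \<in> X \<Longrightarrow> F u \<noteq> 0 \<Longrightarrow> v \<le> u"
      using hahn_series_least_support_point[OF assms(3)] by blast
    have X: "X = Tcls \<alpha> v" using Tcls_eq_if_mem[of \<alpha> v s] v(1) s(1) assms(2) by simp
    have "v \<in> exponent_collisions \<alpha> P d"
    proof (rule least_support_point_in_exponent_collisions)
      show "\<alpha> > 0" using assms(2) by simp
      show "v \<le> u" if "u \<in> Tcls \<alpha> v" "F u \<noteq> 0" for u
        using v(3) that unfolding X by blast
    qed (use assms(5,6) v(2) in auto)
    then show ?thesis using X by blast
  qed
  then have "{Tcls \<alpha> s | s. Tcls \<alpha> s \<inter> hsupp F \<noteq> {}} \<subseteq> Tcls \<alpha> ` exponent_collisions \<alpha> P d"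
    by blast
  then show ?thesis
    by (rule finite_subset) (intro finite_imageI finite_exponent_collisions assms(2))
qed

end
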